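(* For all integers $m,n\geq 1$, \[p^{od}_{ed}(2m-1,2n)=p^{od}_{ed}(2m-1,2n-1).\]
   Context: $\mathcal{P}^{od}_{ed}$ is the set of integer partitions whose parts are all distinct and such that every even part is smaller than every odd part. Partitions consisting only of odd parts, or only of even parts, are allowed. $p^{od}_{ed}(m,n)$ is the number of partitions of $n$ in $\mathcal{P}^{od}_{ed}$ with exactly $m$ parts. *)

theory Defs
  imports Main
begin

text \<open>A partition into distinct parts is represented by its (finite) set of parts,
  all positive integers. The class P^od_ed: distinct parts, every even part is
  smaller than every odd part.\<close>

definition in_Pod_ed :: "nat set \<Rightarrow> bool" where
  "in_Pod_ed S \<longleftrightarrow> finite S \<and> 0 \<notin> S \<and>
     (\<forall>e\<in>S. \<forall>d\<in>S. even e \<longrightarrow> odd d \<longrightarrow> e < d)"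

definition p_od_ed :: "nat \<Rightarrow> nat \<Rightarrow> nat" where
  "p_od_ed m n = card {S. in_Pod_ed S \<and> card S = m \<and> \<Sum>S = n}"

end

theory Submission
  imports Defs
begin

text \<open>If a partition in P^od_ed has an even part, lowering its largest even part e by one
  stays in the class: e - 1 is odd, and it lies below every odd part (which exceeds e) and above
  every other even part. The inverse raises the smallest odd part by one. This is a bijection,
  preserving the number of parts, between the partitions of N + 1 with an even part and those of
  N with an odd part. With an odd number of parts, a partition of an even number must have an
  even part and a partition of an odd number an odd part.\<close>

lemma even_sum_odd_parts_iff:
  fixes S :: "nat set"
  assumes "finite S" and "\<forall>x\<in>S. odd x"
  shows "even (\<Sum>S) \<longleftrightarrow> even (card S)"
  using assms by (induction S rule: finite_induct) auto

lemma odd_sum_has_odd_part: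
  fixes S :: "nat set"
  assumes "odd (\<Sum>S)"
  shows "\<exists>x\<in>S. odd x"
  using assms dvd_sum[of S 2 id] by auto

lemma card_exchange:
  assumes "finite S" "x \<in> S" "y \<notin> S"
  shows "card (insert y (S - {x})) = card S"
  using assms by (metis card_Suc_Diff1 card_insert_disjoint finite_Diff insert_iff insert_Diff)

lemma sum_exchange:
  fixes f :: "'a \<Rightarrow> 'b::comm_monoid_add"
  assumes "finite S" "x \<in> S" "y \<notin> S"
  shows "sum f (insert y (S - {x})) + f x = sum f S + f y"
  using assms by (simp add: sum.remove[of S x] add_ac)

lemma exchange_exchange:
  assumes "x \<in> S" "y \<notin> S"
  shows "insert x (insert y (S - {x}) - {y}) = S"
  using assms by auto

definition lower_max_even :: "nat set \<Rightarrow> nat set" where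
  "lower_max_even S = (let e = Max {x\<in>S. even x} in insert (e - 1) (S - {e}))"

definition raise_min_odd :: "nat set \<Rightarrow> nat set" where
  "raise_min_odd T = (let d = Min {x\<in>T. odd x} in insert (d + 1) (T - {d}))"

lemma lower_max_even:
  assumes Pod: "in_Pod_ed S" and "\<exists>x\<in>S. even x"
  shows "in_Pod_ed (lower_max_even S)" "card (lower_max_even S) = card S"
    "\<Sum>(lower_max_even S) + 1 = \<Sum>S" "\<exists>x\<in>lower_max_even S. odd x"
    "raise_min_odd (lower_max_even S) = S"
proof -
  define e where "e = Max {x\<in>S. even x}"
  have fin: "finite S" and "0 \<notin> S" and ord: "\<And>a b. a \<in> S \<Longrightarrow> b \<in> S \<Longrightarrow> even a \<Longrightarrow> odd b \<Longrightarrow> a < b"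
    using Pod unfolding in_Pod_ed_def by auto
  have "e \<in> {x\<in>S. even x}" unfolding e_def using fin assms(2) by (intro Max_in) auto
  then have eS: "e \<in> S" and ee: "even e" by auto
  have emax: "a \<le> e" if "a \<in> S" "even a" for a unfolding e_def using fin that by auto
  have "e \<noteq> 0" using eS \<open>0 \<notin> S\<close> by metis
  with ee have e2: "e \<ge> 2" by presburger
  have oe: "odd (e - 1)" using ee e2 by simp
  have nS: "e - 1 \<notin> S" using ord[OF eS _ ee oe] by auto
  have lower_eq: "lower_max_even S = insert (e - 1) (S - {e})"
    unfolding lower_max_even_def e_def[symmetric] by simp
  show inP: "in_Pod_ed (lower_max_even S)"
    unfolding in_Pod_ed_def lower_eq
  proof (intro conjI ballI impI)
    fix a b assume a: "a \<in> insert (e - 1) (S - {e})" and b: "b \<in> insert (e - 1) (S - {e})"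
      and "even a" "odd b"
    then have "a \<in> S" "a \<noteq> e" using oe by auto
    then have "a < e - 1" using emax[of a] \<open>even a\<close> ee by (simp add: le_less) presburger
    then show "a < b" using b ord[of a b] \<open>a \<in> S\<close> \<open>even a\<close> \<open>odd b\<close> by auto
  qed (use fin \<open>0 \<notin> S\<close> e2 in auto)
  show "card (lower_max_even S) = card S" unfolding lower_eq using fin eS nS by (rule card_exchange)
  show "\<Sum>(lower_max_even S) + 1 = \<Sum>S"
    using sum_exchange[OF fin eS nS, of id] e2 unfolding lower_eq by simp
  show "\<exists>x\<in>lower_max_even S. odd x" using lower_eq oe by blast
  have "Min {x\<in>lower_max_even S. odd x} = e - 1"
  proof (rule Min_eqI)
    show "finite {x\<in>lower_max_even S. odd x}" using inP unfolding in_Pod_ed_def by simp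
  qed (use lower_eq oe ord[OF eS _ ee] in fastforce)+
  then show "raise_min_odd (lower_max_even S) = S"
    unfolding raise_min_odd_def using e2 exchange_exchange[OF eS nS] by (simp add: lower_eq)
qed

lemma raise_min_odd:
  assumes Pod: "in_Pod_ed T" and "\<exists>x\<in>T. odd x"
  shows "in_Pod_ed (raise_min_odd T)" "card (raise_min_odd T) = card T"
    "\<Sum>(raise_min_odd T) = \<Sum>T + 1" "\<exists>x\<in>raise_min_odd T. even x"
    "lower_max_even (raise_min_odd T) = T"
proof -
  define d where "d = Min {x\<in>T. odd x}"
  have fin: "finite T" and "0 \<notin> T" and ord: "\<And>a b. a \<in> T \<Longrightarrow> b \<in> T \<Longrightarrow> even a \<Longrightarrow> odd b \<Longrightarrow> a < b"
    using Pod unfolding in_Pod_ed_def by auto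
  have "d \<in> {x\<in>T. odd x}" unfolding d_def using fin assms(2) by (intro Min_in) auto
  then have dT: "d \<in> T" and od: "odd d" by auto
  have dmin: "d \<le> b" if "b \<in> T" "odd b" for b unfolding d_def using fin that by auto
  have ed: "even (d + 1)" using od by simp
  have nT: "d + 1 \<notin> T" using ord[OF _ dT ed od] by auto
  have raise_eq: "raise_min_odd T = insert (d + 1) (T - {d})"
    unfolding raise_min_odd_def d_def[symmetric] by simp
  show inP: "in_Pod_ed (raise_min_odd T)"
    unfolding in_Pod_ed_def raise_eq
  proof (intro conjI ballI impI)
    fix a b assume a: "a \<in> insert (d + 1) (T - {d})" and b: "b \<in> insert (d + 1) (T - {d})"
      and "even a" "odd b"
    then have "b \<in> T" "b \<noteq> d" using ed by auto
    then have "d + 1 < b" using dmin[of b] \<open>odd b\<close> od by (simp add: le_less) presburger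
    then show "a < b" using a ord[of a b] \<open>b \<in> T\<close> \<open>even a\<close> \<open>odd b\<close> by auto
  qed (use fin \<open>0 \<notin> T\<close> in auto)
  show "card (raise_min_odd T) = card T" unfolding raise_eq using fin dT nT by (rule card_exchange)
  show "\<Sum>(raise_min_odd T) = \<Sum>T + 1"
    using sum_exchange[OF fin dT nT, of id] unfolding raise_eq by simp
  show "\<exists>x\<in>raise_min_odd T. even x" using raise_eq ed by blast
  have "Max {x\<in>raise_min_odd T. even x} = d + 1"
  proof (rule Max_eqI)
    show "finite {x\<in>raise_min_odd T. even x}" using inP unfolding in_Pod_ed_def by simp
  qed (use raise_eq ed ord[OF _ dT _ od] in fastforce)+
  then show "lower_max_even (raise_min_odd T) = T"
    unfolding lower_max_even_def using exchange_exchange[OF dT nT] by (simp add: raise_eq)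
qed

lemma card_Pod_ed_with_even_part_eq_with_odd_part:
  "card {S. in_Pod_ed S \<and> card S = k \<and> \<Sum>S = N + 1 \<and> (\<exists>x\<in>S. even x)}
     = card {T. in_Pod_ed T \<and> card T = k \<and> \<Sum>T = N \<and> (\<exists>x\<in>T. odd x)}"
  (is "card ?A = card ?B")
proof (intro bij_betw_same_card bij_betw_byWitness[where f' = raise_min_odd])
  show "\<forall>S\<in>?A. raise_min_odd (lower_max_even S) = S" using lower_max_even(5) by blast
  show "\<forall>T\<in>?B. lower_max_even (raise_min_odd T) = T" using raise_min_odd(5) by blast
  show "lower_max_even ` ?A \<subseteq> ?B"
  proof
    fix T assume "T \<in> lower_max_even ` ?A"
    then obtain S where "S \<in> ?A" and "T = lower_max_even S" by blast
    then show "T \<in> ?B" using lower_max_even[of S] by auto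
  qed
  show "raise_min_odd ` ?B \<subseteq> ?A"
  proof
    fix S assume "S \<in> raise_min_odd ` ?B"
    then obtain T where "T \<in> ?B" and "S = raise_min_odd T" by blast
    then show "S \<in> ?A" using raise_min_odd[of T] by auto
  qed
qed

theorem mainTheorem3:
  fixes m n :: nat
  assumes "m \<ge> 1" and "n \<ge> 1"
  shows "p_od_ed (2*m - 1) (2*n) = p_od_ed (2*m - 1) (2*n - 1)"
proof -
  have odd_card: "odd (2*m - 1)" using assms by presburger
  have "{S. in_Pod_ed S \<and> card S = 2*m - 1 \<and> \<Sum>S = 2*n}
      = {S. in_Pod_ed S \<and> card S = 2*m - 1 \<and> \<Sum>S = (2*n - 1) + 1 \<and> (\<exists>x\<in>S. even x)}"
    using assms odd_card even_sum_odd_parts_iff unfolding in_Pod_ed_def by fastforce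
  moreover have "{T. in_Pod_ed T \<and> card T = 2*m - 1 \<and> \<Sum>T = 2*n - 1}
      = {T. in_Pod_ed T \<and> card T = 2*m - 1 \<and> \<Sum>T = 2*n - 1 \<and> (\<exists>x\<in>T. odd x)}"
    using assms odd_sum_has_odd_part by auto
  ultimately show ?thesis
    unfolding p_od_ed_def using card_Pod_ed_with_even_part_eq_with_odd_part by simp
qed

end
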